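(* Let $g\ge2$, $\sigma\in\mathrm{Spin}(\Sigma_g)$ and $B$ a symplectic basis of $H_1(\Sigma_g;\mathbb{Z}/2)$. The $\mathbb{Z}/8$-submodule of $\mathrm{Map}(H_1(\Sigma_g;\mathbb{Z}/2),\mathbb{Z}/8)$ spanned by the functions $\overline{C}$, $C\in H_1(\Sigma_g;\mathbb{Z}/2)$ (which is the image of Sato's homomorphism $\beta_\sigma$) equals the internal direct sum $$\bigoplus_{X\in B}\mathbb{Z}/8\cdot\overline{X}\ \oplus\bigoplus_{\{X,Y\}\subset B}\mathbb{Z}/8\cdot 2\overline{X}\,\overline{Y}\ \oplus\bigoplus_{\{X,Y,Z\}\subset B}\mathbb{Z}/8\cdot4\overline{X}\,\overline{Y}\,\overline{Z}\ \cong(\mathbb{Z}/8)^{2g}\oplus(\mathbb{Z}/4)^{\binom{2g}{2}}\oplus(\mathbb{Z}/2)^{\binom{2g}{3}},$$ the sums running over subsets of distinct elements of $B$.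
   Context: $\Sigma_g$ is a closed oriented genus $g$ surface. To $\sigma\in\mathrm{Spin}(\Sigma_g)$ is associated (Johnson) a quadratic form $q_\sigma:H_1(\Sigma_g;\mathbb{Z}/2)\to\mathbb{Z}/2$, $q_\sigma(y+z)=q_\sigma(y)+q_\sigma(z)+y\cdot z$. For $z\in H_1(\Sigma_g;\mathbb{Z}/2)$, $i_z(y)=1\in\mathbb{Z}/8$ if $z\cdot y\equiv1\pmod2$ and $0$ otherwise. $\overline{C}:=(-1)^{q_\sigma(C)}i_C\in\mathrm{Map}(H_1(\Sigma_g;\mathbb{Z}/2),\mathbb{Z}/8)$, a $\mathbb{Z}/8$-algebra under pointwise operations. Sato's homomorphism $\beta_\sigma:\mathrm{Mod}_{g,1}[2]\to\mathrm{Map}(H_1(\Sigma_g;\mathbb{Z}/2),\mathbb{Z}/8)$ satisfies $\beta_\sigma(t_c^2)=\overline{[c]}$ for non-separating simple closed curves $c$, and $\mathrm{Mod}_{g,1}[2]$ (the level 2 subgroup of the mapping class group of $\Sigma_g$ rel a disc) is generated by such squares. A symplectic basis satisfies $A_i\cdot B_j=\delta_{ij}$, $A_i\cdot A_j=B_i\cdot B_j=0$. *)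

theory Defs
  imports Main "HOL-Library.Z2" "HOL-Library.Numeral_Type"
    "HOL-Library.Function_Algebras" "HOL-Library.Product_Plus"
begin

text \<open>Model of H_1(Sigma_g; Z/2): pairs of coordinate vectors indexed by a finite
  type 'g with CARD('g) = g (a-coordinates and b-coordinates of the standard basis).\<close>
type_synonym 'g hom1 = "('g \<Rightarrow> bit) \<times> ('g \<Rightarrow> bit)"

definition ipair :: "'g::finite hom1 \<Rightarrow> 'g hom1 \<Rightarrow> bit" where
  "ipair x y = (\<Sum>i\<in>UNIV. fst x i * snd y i + snd x i * fst y i)"

text \<open>Quadratic forms of Johnson (these are exactly the spin structures).\<close>
definition quad_form :: "('g::finite hom1 \<Rightarrow> bit) \<Rightarrow> bool" where
  "quad_form q \<longleftrightarrow> (\<forall>y z. q (y + z) = q y + q z + ipair y z)"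

definition symplectic_basis :: "('g::finite \<Rightarrow> 'g hom1) \<Rightarrow> ('g \<Rightarrow> 'g hom1) \<Rightarrow> bool" where
  "symplectic_basis A B \<longleftrightarrow>
     (\<forall>i j. ipair (A i) (B j) = (if i = j then 1 else 0)
          \<and> ipair (A i) (A j) = 0 \<and> ipair (B i) (B j) = 0)"

definition ind :: "'g::finite hom1 \<Rightarrow> 'g hom1 \<Rightarrow> 8" where
  "ind z y = (if ipair z y = 1 then 1 else 0)"

definition cbar :: "('g::finite hom1 \<Rightarrow> bit) \<Rightarrow> 'g hom1 \<Rightarrow> ('g hom1 \<Rightarrow> 8)" where
  "cbar q C = (\<lambda>y. (if q C = 1 then -1 else 1) * ind C y)"

definition cbar_span :: "('g::finite hom1 \<Rightarrow> bit) \<Rightarrow> ('g hom1 \<Rightarrow> 8) set" where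
  "cbar_span q = {f. \<exists>c :: 'g hom1 \<Rightarrow> 8. f = (\<lambda>y. \<Sum>C\<in>UNIV. c C * cbar q C y)}"

definition basis_set :: "('g::finite \<Rightarrow> 'g hom1) \<Rightarrow> ('g \<Rightarrow> 'g hom1) \<Rightarrow> 'g hom1 set" where
  "basis_set A B = range A \<union> range B"

definition summand_index :: "('g::finite \<Rightarrow> 'g hom1) \<Rightarrow> ('g \<Rightarrow> 'g hom1) \<Rightarrow> 'g hom1 set set" where
  "summand_index A B = {S. S \<subseteq> basis_set A B \<and> 1 \<le> card S \<and> card S \<le> 3}"

text \<open>Generator for S: X-bar, 2 X-bar Y-bar, 4 X-bar Y-bar Z-bar.\<close>
definition gen :: "('g::finite hom1 \<Rightarrow> bit) \<Rightarrow> 'g hom1 set \<Rightarrow> ('g hom1 \<Rightarrow> 8)" where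
  "gen q S = (\<lambda>y. 2 ^ (card S - 1) * (\<Prod>X\<in>S. cbar q X y))"

end

theory Submission
  imports Defs "HOL-Library.Cardinality"
begin

text \<open>
  Write i_C for the indicator y \<mapsto> [C \<cdot> y = 1] with values in Z/8, so that C-bar is \<plusminus>i_C.
  Every C is the sum of a subset of the symplectic basis, and the identity
  i_(X+Y) = i_X + i_Y - 2 i_X i_Y expands i_C into the products 2^(|S|-1) \<Prod>_(X\<in>S) i_X over
  subsets S of the basis; products of four or more factors carry the coefficient 8 = 0.
  Conversely 2 i_X i_Y and 4 i_X i_Y i_Z are inclusion-exclusion combinations of indicators.
  At the point y_T dual to a subset T of the basis, \<Prod>_(X\<in>S) i_X (y_T) = [S \<subseteq> T]; so the
  generators are unitriangular with respect to inclusion, which gives directness, and each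
  summand is Z/8 times 2^(|S|-1) times a unit.
\<close>

lemma UNIV_8: "(UNIV :: 8 set) = {0, 1, 2, 3, 4, 5, 6, 7}"
proof -
  have "a \<in> {0, 1, 2, 3, 4, 5, 6, 7}" for a :: 8
  proof -
    obtain z where z: "a = of_int z" "0 \<le> z" "z < 8" by (cases a) auto
    then have "z \<in> {0, 1, 2, 3, 4, 5, 6, 7}" by auto
    then show ?thesis using z(1) by auto
  qed
  then show ?thesis by auto
qed

lemma card_range_mult_pow2_8: "k \<le> 2 \<Longrightarrow> card (range (\<lambda>a :: 8. a * 2 ^ k)) = 2 ^ (3 - k)"
proof -
  assume "k \<le> 2"
  then consider "k = 0" | "k = 1" | "k = 2" by linarith
  then show ?thesis
  proof cases
    case 1
    then show ?thesis by simp
  next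
    case 2
    have "range (\<lambda>a :: 8. a * 2) = {0, 2, 4, 6}" unfolding UNIV_8 by auto
    then show ?thesis using 2 by simp
  next
    case 3
    have "range (\<lambda>a :: 8. a * 4) = {0, 4}" unfolding UNIV_8 by auto
    then show ?thesis using 3 by simp
  qed
qed

lemma card_scalar_multiples:
  fixes h :: "'x \<Rightarrow> 'r::comm_ring_1"
  assumes "h y0 dvd 1"
  shows "card {(\<lambda>y. a * (m * h y)) | a. True} = card (range (\<lambda>a. a * m))"
proof -
  obtain v where v: "h y0 * v = 1" using assms by (metis dvdE)
  let ?F = "\<lambda>a y. a * (m * h y)" and ?ev = "\<lambda>f. f y0 * v"
  have "inj_on ?ev (range ?F)"
  proof (rule inj_onI, clarify)
    fix a a' assume "a * (m * h y0) * v = a' * (m * h y0) * v"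
    then have "a * m = a' * m" by (simp add: mult.assoc v)
    then show "?F a = ?F a'" by (simp add: mult.assoc[symmetric])
  qed
  then have "card (range ?F) = card (?ev ` range ?F)" by (rule card_image[symmetric])
  also have "?ev ` range ?F = range (\<lambda>a. a * m)" by (simp add: image_image mult.assoc v)
  finally show ?thesis by (simp add: full_SetCompr_eq)
qed

lemma zero_if_subset_sums_zero:
  fixes d :: "'a set \<Rightarrow> 'b::comm_monoid_add"
  assumes "finite I" and "\<And>S. S \<in> I \<Longrightarrow> finite S"
    and "\<And>T. T \<in> I \<Longrightarrow> (\<Sum>S\<in>{S \<in> I. S \<subseteq> T}. d S) = 0"
  shows "S \<in> I \<Longrightarrow> d S = 0"
proof (induction "card S" arbitrary: S rule: less_induct)
  case less
  have "{U \<in> I. U \<subseteq> S} = insert S {U \<in> I. U \<subset> S}" using less.prems by auto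
  then have "(\<Sum>U\<in>{U \<in> I. U \<subseteq> S}. d U) = d S + (\<Sum>U\<in>{U \<in> I. U \<subset> S}. d U)"
    using assms(1) by (simp add: sum.insert)
  then have "0 = d S + (\<Sum>U\<in>{U \<in> I. U \<subset> S}. d U)"
    using assms(3)[OF less.prems] by simp
  also have "(\<Sum>U\<in>{U \<in> I. U \<subset> S}. d U) = 0"
    using less assms(2) psubset_card_mono by (intro sum.neutral) auto
  finally show ?case by simp
qed

definition fun_span :: "'j set \<Rightarrow> ('j \<Rightarrow> 'x \<Rightarrow> 'r::comm_ring_1) \<Rightarrow> ('x \<Rightarrow> 'r) set" where
  "fun_span J h = {f. \<exists>c. f = (\<lambda>y. \<Sum>j\<in>J. c j * h j y)}"

lemma fun_span_zero: "(\<lambda>y. 0) \<in> fun_span J h"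
  unfolding fun_span_def by (auto intro: exI[of _ "\<lambda>_. 0"])

lemma fun_span_add: "f \<in> fun_span J h \<Longrightarrow> g \<in> fun_span J h \<Longrightarrow> (\<lambda>y. f y + g y) \<in> fun_span J h"
  unfolding fun_span_def
  by (clarify, rule exI[of _ "\<lambda>j. _ j + _ j"]) (simp add: sum.distrib distrib_right)

lemma fun_span_scale: "f \<in> fun_span J h \<Longrightarrow> (\<lambda>y. a * f y) \<in> fun_span J h"
  unfolding fun_span_def
  by (clarify, rule exI[of _ "\<lambda>j. a * _ j"]) (simp add: sum_distrib_left mult.assoc)

lemma fun_span_diff: "f \<in> fun_span J h \<Longrightarrow> g \<in> fun_span J h \<Longrightarrow> (\<lambda>y. f y - g y) \<in> fun_span J h"
  using fun_span_add[of f J h "\<lambda>y. (-1) * g y"] fun_span_scale[of g J h "-1"] by simp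

lemma fun_span_base: "finite J \<Longrightarrow> j \<in> J \<Longrightarrow> h j \<in> fun_span J h"
  unfolding fun_span_def
  by (rule CollectI, rule exI[of _ "\<lambda>i. of_bool (i = j)"]) (simp add: fun_eq_iff Int_insert_right)

lemma fun_span_sum:
  "finite K \<Longrightarrow> (\<And>k. k \<in> K \<Longrightarrow> g k \<in> fun_span J h) \<Longrightarrow> (\<lambda>y. \<Sum>k\<in>K. c k * g k y) \<in> fun_span J h"
  by (induction K rule: finite_induct) (simp_all add: fun_span_zero fun_span_add fun_span_scale)

lemma fun_span_subset:
  assumes "finite J'" "\<And>j. j \<in> J' \<Longrightarrow> h' j \<in> fun_span J h"
  shows "fun_span J' h' \<subseteq> fun_span J h"
proof
  fix f assume "f \<in> fun_span J' h'"
  then obtain c where "f = (\<lambda>y. \<Sum>j\<in>J'. c j * h' j y)" unfolding fun_span_def by blast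
  with fun_span_sum[OF assms] show "f \<in> fun_span J h" by simp
qed

lemma UNIV_bit: "(UNIV :: bit set) = {0, 1}"
  by (auto intro: bit.exhaust)

lemma card_bit: "CARD(bit) = 2"
  by (simp add: UNIV_bit)

lemma card_hom1: "CARD('g::finite hom1) = 2 ^ CARD('g) * 2 ^ CARD('g)"
  by (simp add: card_prod card_fun card_bit)

lemma finite_hom1 [simp]: "finite (UNIV :: 'g::finite hom1 set)"
  using card_hom1[where 'g='g] by (intro card_ge_0_finite) simp

lemma finite_hom1_set [simp]: "finite (S :: 'g::finite hom1 set)"
  by (rule finite_subset[OF subset_UNIV]) simp

lemma finite_summand_index: "finite (summand_index A B)"
proof -
  have "finite (Pow (UNIV :: 'g::finite hom1 set))" by (simp only: finite_Pow_iff finite_hom1)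
  then show ?thesis by (rule finite_subset[rotated]) auto
qed

(* Keep bit arithmetic in ring form; otherwise sums of bits are rewritten into counting formulas. *)
declare add_bit_eq_xor [simp del] mult_bit_eq_and [simp del]

lemma ipair_sym: "ipair x y = ipair y x"
  by (simp add: ipair_def mult.commute add.commute)

lemma ipair_add_left: "ipair (x + y) z = ipair x z + ipair y z"
  by (simp add: ipair_def sum.distrib distrib_right add_ac)

lemma ipair_zero_left: "ipair 0 z = 0"
  by (simp add: ipair_def)

lemma ipair_sum_left: "finite T \<Longrightarrow> ipair (\<Sum>X\<in>T. f X) z = (\<Sum>X\<in>T. ipair (f X) z)"
  by (induction T rule: finite_induct) (simp_all add: ipair_add_left ipair_zero_left)

lemma ipair_sum_right: "finite T \<Longrightarrow> ipair z (\<Sum>X\<in>T. f X) = (\<Sum>X\<in>T. ipair z (f X))"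
  using ipair_sum_left[of T f z] by (simp add: ipair_sym)

lemma ind_add: "ind (X + Y) y = ind X y + ind Y y - 2 * ind X y * ind Y y"
  unfolding ind_def ipair_add_left by (cases "ipair X y"; cases "ipair Y y") simp_all

lemma ind_add3:
  "4 * ind X y * ind Y y * ind Z y =
     ind (X + Y + Z) y + ind X y + ind Y y + ind Z y - ind (X + Y) y - ind (X + Z) y - ind (Y + Z) y"
  unfolding ind_def ipair_add_left by (cases "ipair X y"; cases "ipair Y y"; cases "ipair Z y") simp_all

lemma ind_zero: "ind 0 y = 0"
  by (simp add: ind_def ipair_zero_left)

lemma ind_idem: "ind X y * ind X y = ind X y"
  by (simp add: ind_def)

definition qsign :: "('g::finite hom1 \<Rightarrow> bit) \<Rightarrow> 'g hom1 \<Rightarrow> 8" where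
  "qsign q X = (if q X = 1 then -1 else 1)"

definition ind_prod :: "'g::finite hom1 set \<Rightarrow> 'g hom1 \<Rightarrow> 8" where
  "ind_prod S y = (\<Prod>X\<in>S. ind X y)"

lemma qsign_mult_cancel: "qsign q X * (qsign q X * a) = a"
  by (simp add: qsign_def)

lemma prod_qsign_mult_self: "(\<Prod>X\<in>S. qsign q X) * (\<Prod>X\<in>S. qsign q X) = 1"
  using qsign_mult_cancel[of q _ 1] by (simp add: prod.distrib[symmetric])

lemma cbar_eq_qsign_ind: "cbar q X y = qsign q X * ind X y"
  by (simp add: cbar_def qsign_def)

lemma gen_eq_ind_prod: "gen q S y = 2 ^ (card S - 1) * (\<Prod>X\<in>S. qsign q X) * ind_prod S y"
  by (simp add: gen_def ind_prod_def cbar_eq_qsign_ind prod.distrib mult.assoc)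

lemma ind_in_cbar_span: "ind X \<in> fun_span UNIV (cbar q)"
proof -
  have "(\<lambda>y. qsign q X * cbar q X y) \<in> fun_span UNIV (cbar q)"
    by (intro fun_span_scale fun_span_base) simp_all
  then show ?thesis by (simp add: cbar_eq_qsign_ind qsign_mult_cancel)
qed

lemma gen_in_cbar_span:
  assumes "1 \<le> card S" and "card S \<le> 3"
  shows "gen q S \<in> fun_span UNIV (cbar q)"
proof -
  have "card S = 1 \<or> card S = 2 \<or> card S = 3" using assms by linarith
  then consider X where "S = {X}" | X Y where "S = {X, Y}" "X \<noteq> Y"
    | X Y Z where "S = {X, Y, Z}" "X \<noteq> Y" "Y \<noteq> Z" "X \<noteq> Z"
    unfolding One_nat_def card_1_singleton_iff card_2_iff card_3_iff by blast
  then show ?thesis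
  proof cases
    case (1 X)
    then have "gen q S = cbar q X" by (simp add: gen_def fun_eq_iff)
    then show ?thesis by (simp add: fun_span_base)
  next
    case (2 X Y)
    then have "gen q S = (\<lambda>y. (qsign q X * qsign q Y) * (ind X y + ind Y y - ind (X + Y) y))"
      by (simp add: fun_eq_iff gen_eq_ind_prod ind_prod_def ind_add algebra_simps)
    then show ?thesis by (simp add: fun_span_scale fun_span_add fun_span_diff ind_in_cbar_span)
  next
    case (3 X Y Z)
    let ?s = "qsign q X * qsign q Y * qsign q Z"
    have "gen q S y = ?s * (4 * ind X y * ind Y y * ind Z y)" for y
      using 3 by (simp add: gen_eq_ind_prod ind_prod_def algebra_simps)
    then have "gen q S = (\<lambda>y. ?s *
        (ind (X + Y + Z) y + ind X y + ind Y y + ind Z y - ind (X + Y) y - ind (X + Z) y - ind (Y + Z) y))"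
      by (simp add: fun_eq_iff ind_add3)
    then show ?thesis by (simp add: fun_span_scale fun_span_add fun_span_diff ind_in_cbar_span)
  qed
qed

definition basis_dual :: "('g::finite \<Rightarrow> 'g hom1) \<Rightarrow> ('g \<Rightarrow> 'g hom1) \<Rightarrow> 'g hom1 \<Rightarrow> 'g hom1" where
  "basis_dual A B X = (if X \<in> range A then B (inv A X) else A (inv B X))"

definition dual_point :: "('g::finite \<Rightarrow> 'g hom1) \<Rightarrow> ('g \<Rightarrow> 'g hom1) \<Rightarrow> 'g hom1 set \<Rightarrow> 'g hom1" where
  "dual_point A B W = (\<Sum>X\<in>W. basis_dual A B X)"

context
  fixes A B :: "'g::finite \<Rightarrow> 'g hom1"
  assumes symplectic: "symplectic_basis A B"
begin

lemma ipair_A_B: "ipair (A i) (B j) = (if i = j then 1 else 0)"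
  and ipair_A_A: "ipair (A i) (A j) = 0"
  and ipair_B_B: "ipair (B i) (B j) = 0"
  using symplectic unfolding symplectic_basis_def by auto

lemma inj_A: "inj A"
  by (rule injI) (metis ipair_A_B zero_neq_one)

lemma inj_B: "inj B"
  by (rule injI) (metis ipair_A_B zero_neq_one)

lemma A_neq_B: "A i \<noteq> B j"
  by (metis ipair_A_B ipair_B_B zero_neq_one)

lemma card_basis_set: "card (basis_set A B) = 2 * CARD('g)"
proof -
  have "range A \<inter> range B = {}" using A_neq_B by blast
  then have "card (basis_set A B) = card (range A) + card (range B)"
    unfolding basis_set_def by (simp add: card_Un_disjoint)
  then show ?thesis using inj_A inj_B by (simp add: card_image)
qed

lemma ipair_basis_dual:
  assumes "X \<in> basis_set A B" and "Z \<in> basis_set A B"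
  shows "ipair Z (basis_dual A B X) = (if Z = X then 1 else 0)"
proof -
  have dual_A: "basis_dual A B (A k) = B k" for k
    using inj_A by (simp add: basis_dual_def)
  have dual_B: "basis_dual A B (B k) = A k" for k
  proof -
    have "B k \<notin> range A" using A_neq_B by (metis rangeE)
    then show ?thesis using inj_B by (simp add: basis_dual_def)
  qed
  from assms obtain i k where "(Z = A i \<or> Z = B i) \<and> (X = A k \<or> X = B k)"
    unfolding basis_set_def by blast
  then show ?thesis
    by (elim conjE disjE) (simp_all add: dual_A dual_B ipair_A_B ipair_A_A ipair_B_B
        ipair_sym[of "B i"] A_neq_B A_neq_B[symmetric] inj_eq[OF inj_A] inj_eq[OF inj_B] eq_commute[of i])
qed

lemma ipair_sum_basis_dual:
  assumes "T \<subseteq> basis_set A B" and "X \<in> basis_set A B"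
  shows "ipair (\<Sum>Z\<in>T. Z) (basis_dual A B X) = (if X \<in> T then 1 else 0)"
proof -
  have "ipair (\<Sum>Z\<in>T. Z) (basis_dual A B X) = (\<Sum>Z\<in>T. ipair Z (basis_dual A B X))"
    by (simp add: ipair_sum_left)
  also have "\<dots> = (\<Sum>Z\<in>T. if Z = X then 1 else 0)"
    using assms by (intro sum.cong) (auto simp: ipair_basis_dual)
  finally show ?thesis by simp
qed

lemma ind_dual_point:
  assumes "W \<subseteq> basis_set A B" and "Z \<in> basis_set A B"
  shows "ind Z (dual_point A B W) = (if Z \<in> W then 1 else 0)"
proof -
  have "ipair Z (dual_point A B W) = (\<Sum>X\<in>W. ipair Z (basis_dual A B X))"
    by (simp add: dual_point_def ipair_sum_right)
  also have "\<dots> = (\<Sum>X\<in>W. if Z = X then 1 else 0)"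
    using assms by (intro sum.cong) (auto simp: ipair_basis_dual)
  finally show ?thesis by (simp add: ind_def)
qed

lemma ind_prod_dual_point:
  assumes "U \<subseteq> basis_set A B" and "W \<subseteq> basis_set A B"
  shows "ind_prod U (dual_point A B W) = (if U \<subseteq> W then 1 else 0)"
proof -
  have "ind_prod U (dual_point A B W) = (\<Prod>X\<in>U. if X \<in> W then 1 else 0)"
    unfolding ind_prod_def using assms by (intro prod.cong) (auto simp: ind_dual_point)
  also have "\<dots> = (if U \<subseteq> W then 1 else 0)"
  proof (cases "U \<subseteq> W")
    case True
    then have "(\<Prod>X\<in>U. if X \<in> W then 1 else 0) = (\<Prod>X\<in>U. 1 :: 8)" by (intro prod.cong) auto
    then show ?thesis using True by simp
  next
    case False
    then show ?thesis by (auto intro!: prod_zero)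
  qed
  finally show ?thesis .
qed

lemma ex_basis_subset_sum: "\<exists>T \<subseteq> basis_set A B. C = (\<Sum>X\<in>T. X)"
proof -
  let ?E = "basis_set A B" and ?sum = "\<lambda>T. \<Sum>X\<in>T. X"
  have "{X \<in> ?E. ipair (?sum T) (basis_dual A B X) = 1} = T" if "T \<subseteq> ?E" for T
  proof (rule set_eqI)
    fix X show "X \<in> {X \<in> ?E. ipair (?sum T) (basis_dual A B X) = 1} \<longleftrightarrow> X \<in> T"
      using that by (cases "X \<in> ?E") (auto simp: ipair_sum_basis_dual)
  qed
  then have "inj_on ?sum (Pow ?E)"
    by (intro inj_on_inverseI[where g = "\<lambda>C. {X \<in> ?E. ipair C (basis_dual A B X) = 1}"]) simp
  then have "card (?sum ` Pow ?E) = card (Pow ?E)" by (rule card_image)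
  also have "\<dots> = CARD('g hom1)"
    unfolding card_hom1 by (simp add: card_Pow card_basis_set mult_2 power_add)
  finally have "?sum ` Pow ?E = UNIV"
    by (intro card_subset_eq) simp_all
  then show ?thesis by blast
qed

lemma ind_in_gen_span:
  assumes "X \<in> basis_set A B"
  shows "ind X \<in> fun_span (summand_index A B) (gen q)"
proof -
  have "{X} \<in> summand_index A B" using assms by (simp add: summand_index_def)
  then have "(\<lambda>y. qsign q X * gen q {X} y) \<in> fun_span (summand_index A B) (gen q)"
    by (intro fun_span_scale fun_span_base finite_summand_index)
  then show ?thesis
    by (simp add: gen_eq_ind_prod ind_prod_def qsign_mult_cancel)
qed

lemma double_ind_mult_gen_in_gen_span:
  assumes X: "X \<in> basis_set A B" and S: "S \<in> summand_index A B"
  shows "(\<lambda>y. 2 * ind X y * gen q S y) \<in> fun_span (summand_index A B) (gen q)"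
proof -
  have card_S: "1 \<le> card S" "card S \<le> 3" and "S \<subseteq> basis_set A B"
    using S by (auto simp: summand_index_def)
  consider "X \<in> S" | "X \<notin> S" "card S = 3" | "X \<notin> S" "card S < 3" using card_S by linarith
  then show ?thesis
  proof cases
    case 1
    have absorb: "ind X y * ind_prod S y = ind_prod S y" for y
      using 1 by (simp add: ind_prod_def prod.remove mult.assoc[symmetric] ind_idem)
    have "2 * ind X y * gen q S y = 2 * (2 ^ (card S - 1) * (\<Prod>X\<in>S. qsign q X)) * (ind X y * ind_prod S y)"
      for y by (simp add: gen_eq_ind_prod mult_ac)
    then have "(\<lambda>y. 2 * ind X y * gen q S y) = (\<lambda>y. 2 * gen q S y)"
      by (simp only: absorb) (simp add: fun_eq_iff gen_eq_ind_prod mult_ac)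
    then show ?thesis using S by (simp add: fun_span_scale fun_span_base finite_summand_index)
  next
    case 2
    have eight: "(8 :: 8) = 0" by simp
    have "(\<lambda>y. 2 * ind X y * gen q S y) = (\<lambda>y. 0)"
      using 2 by (simp add: fun_eq_iff gen_eq_ind_prod) (simp only: eight mult_zero_left simp_thms)
    then show ?thesis by (simp add: fun_span_zero)
  next
    case 3
    have S': "insert X S \<in> summand_index A B"
      using 3 X \<open>S \<subseteq> basis_set A B\<close> by (simp add: summand_index_def)
    have "2 * (2 :: 8) ^ (card S - 1) = 2 ^ card S"
      using card_S by (simp add: power_Suc[symmetric])
    then have "(\<lambda>y. 2 * ind X y * gen q S y) = (\<lambda>y. qsign q X * gen q (insert X S) y)"
      using 3 by (simp add: fun_eq_iff gen_eq_ind_prod ind_prod_def algebra_simps qsign_mult_cancel)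
    then show ?thesis using S' by (simp add: fun_span_scale fun_span_base finite_summand_index)
  qed
qed

lemma double_ind_mult_in_gen_span:
  assumes X: "X \<in> basis_set A B" and f: "f \<in> fun_span (summand_index A B) (gen q)"
  shows "(\<lambda>y. 2 * ind X y * f y) \<in> fun_span (summand_index A B) (gen q)"
proof -
  obtain c where "f = (\<lambda>y. \<Sum>S\<in>summand_index A B. c S * gen q S y)"
    using f unfolding fun_span_def by blast
  then have "(\<lambda>y. 2 * ind X y * f y) = (\<lambda>y. \<Sum>S\<in>summand_index A B. c S * (2 * ind X y * gen q S y))"
    by (simp add: fun_eq_iff sum_distrib_left mult_ac)
  also have "\<dots> \<in> fun_span (summand_index A B) (gen q)"
    using double_ind_mult_gen_in_gen_span[OF X] finite_summand_index by (intro fun_span_sum)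
  finally show ?thesis .
qed

lemma ind_sum_in_gen_span:
  assumes "T \<subseteq> basis_set A B"
  shows "ind (\<Sum>X\<in>T. X) \<in> fun_span (summand_index A B) (gen q)"
  using finite_hom1_set[of T] assms
proof (induction T rule: finite_induct)
  case empty
  show ?case by (simp add: ind_zero fun_span_zero)
next
  case (insert X T)
  then have X: "X \<in> basis_set A B" and IH: "ind (\<Sum>X\<in>T. X) \<in> fun_span (summand_index A B) (gen q)"
    by auto
  have "(\<lambda>y. ind X y + ind (\<Sum>X\<in>T. X) y - 2 * ind X y * ind (\<Sum>X\<in>T. X) y)
      \<in> fun_span (summand_index A B) (gen q)"
    by (intro fun_span_diff fun_span_add ind_in_gen_span[OF X] IH double_ind_mult_in_gen_span[OF X])
  then show ?case using insert by (simp add: ind_add)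
qed

lemma cbar_in_gen_span: "cbar q C \<in> fun_span (summand_index A B) (gen q)"
proof -
  obtain T where "T \<subseteq> basis_set A B" "C = (\<Sum>X\<in>T. X)" using ex_basis_subset_sum by blast
  then have "(\<lambda>y. qsign q C * ind C y) \<in> fun_span (summand_index A B) (gen q)"
    by (simp add: fun_span_scale ind_sum_in_gen_span)
  then show ?thesis by (simp add: cbar_eq_qsign_ind[abs_def])
qed

lemma cbar_span_eq_gen_span: "cbar_span q = fun_span (summand_index A B) (gen q)"
proof
  show "cbar_span q \<subseteq> fun_span (summand_index A B) (gen q)"
    unfolding cbar_span_def fun_span_def[symmetric] by (intro fun_span_subset cbar_in_gen_span) simp
  show "fun_span (summand_index A B) (gen q) \<subseteq> cbar_span q"
    unfolding cbar_span_def fun_span_def[symmetric]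
    by (intro fun_span_subset finite_summand_index gen_in_cbar_span) (simp_all add: summand_index_def)
qed

lemma gen_span_direct:
  assumes eq: "(\<lambda>y. \<Sum>S\<in>summand_index A B. c S * gen q S y) = (\<lambda>y. \<Sum>S\<in>summand_index A B. c' S * gen q S y)"
    and S: "S \<in> summand_index A B"
  shows "(\<lambda>y. c S * gen q S y) = (\<lambda>y. c' S * gen q S y)"
proof -
  let ?I = "summand_index A B"
  define d where "d S = (c S - c' S) * (2 ^ (card S - 1) * (\<Prod>X\<in>S. qsign q X))" for S
  have diff: "c S * gen q S y - c' S * gen q S y = d S * ind_prod S y" for S y
    by (simp add: d_def gen_eq_ind_prod algebra_simps)
  have zero: "(\<Sum>S\<in>?I. d S * ind_prod S y) = 0" for y
    using fun_cong[OF eq, of y] by (simp add: diff[symmetric] sum_subtractf)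
  have subset_sums: "(\<Sum>S\<in>{S \<in> ?I. S \<subseteq> T}. d S) = 0" if "T \<in> ?I" for T
  proof -
    have "(\<Sum>S\<in>?I. d S * ind_prod S (dual_point A B T)) = (\<Sum>S\<in>?I. if S \<subseteq> T then d S else 0)"
      using that by (intro sum.cong) (auto simp: ind_prod_dual_point summand_index_def)
    then show ?thesis using zero by (simp add: sum.inter_filter finite_summand_index)
  qed
  have "d S = 0"
    by (rule zero_if_subset_sums_zero[OF finite_summand_index _ subset_sums S]) simp
  then show ?thesis using diff[of S] by (simp add: fun_eq_iff)
qed

lemma card_gen_multiples:
  assumes "S \<in> summand_index A B"
  shows "card {(\<lambda>y. a * gen q S y) | a :: 8. True} = 2 ^ (4 - card S)"
proof -
  have S: "S \<subseteq> basis_set A B" "1 \<le> card S" "card S \<le> 3"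
    using assms by (auto simp: summand_index_def)
  let ?h = "\<lambda>y. (\<Prod>X\<in>S. qsign q X) * ind_prod S y"
  have "?h (dual_point A B S) dvd 1"
    using prod_qsign_mult_self[of q S] by (simp add: ind_prod_dual_point[OF S(1) S(1)] dvdI)
  have "{(\<lambda>y. a * gen q S y) | a :: 8. True} = {(\<lambda>y. a * (2 ^ (card S - 1) * ?h y)) | a. True}"
    by (simp add: gen_eq_ind_prod mult.assoc)
  also have "card \<dots> = card (range (\<lambda>a :: 8. a * 2 ^ (card S - 1)))"
    by (rule card_scalar_multiples) fact
  also have "\<dots> = 2 ^ (4 - card S)"
    using S(2,3) card_range_mult_pow2_8[of "card S - 1"] by simp
  finally show ?thesis .
qed

end

(* The signs (-1)^q(C) are units. *)
theorem mainTheorem11: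
  fixes q :: "'g::finite hom1 \<Rightarrow> bit" and A B :: "'g \<Rightarrow> 'g hom1"
  assumes "CARD('g) \<ge> 2"
    and "quad_form q"
    and "symplectic_basis A B"
  shows "cbar_span q =
           {f. \<exists>c :: 'g hom1 set \<Rightarrow> 8. f = (\<lambda>y. \<Sum>S\<in>summand_index A B. c S * gen q S y)}
       \<and> (\<forall>c c' :: 'g hom1 set \<Rightarrow> 8.
            (\<lambda>y. \<Sum>S\<in>summand_index A B. c S * gen q S y)
              = (\<lambda>y. \<Sum>S\<in>summand_index A B. c' S * gen q S y)
            \<longrightarrow> (\<forall>S\<in>summand_index A B. (\<lambda>y. c S * gen q S y) = (\<lambda>y. c' S * gen q S y)))
       \<and> (\<forall>S\<in>summand_index A B.
            card {(\<lambda>y. a * gen q S y) | a :: 8. True} = 2 ^ (4 - card S))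
       \<and> card (basis_set A B) = 2 * CARD('g)"
  using cbar_span_eq_gen_span[OF assms(3), of q] gen_span_direct[OF assms(3)]
    card_gen_multiples[OF assms(3)] card_basis_set[OF assms(3)]
  unfolding fun_span_def by blast

end
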